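(* For all $n\ge0$ and $y_1,\dots,y_n\in M$, $$K^{-1}(y_1\cdots y_n)=\sum_{\pi\ \text{set partition of}\ \{1,\dots,n\}}(y_1\cdots y_n)^\pi .$$
   Context: $\mathbf k$ field of characteristic zero; $(M,\rhd)$ a magmatic algebra; $T(M)$ its tensor algebra (concatenation, unit $\mathbf 1$), with $\rhd$ extended to $T(M)$ by $\mathbf 1\rhd W=W$, $x\rhd(VW)=(x\rhd V)W+V(x\rhd W)$, $(xV)\rhd W=x\rhd(V\rhd W)-(x\rhd V)\rhd W$ ($x\in M$). Gavrilov's $K$-map is the linear map $K:T(M)\to T(M)$ defined recursively by $K(\mathbf 1)=\mathbf 1$, $K(y)=y$ for $y\in M$, and $K(yU)=y\,K(U)-K(y\rhd U)$ for $y\in M$, $U\in T(M)$; it is invertible. For a set partition $\pi$ of $\{1,\dots,n\}$, its blocks $B_1,\dots,B_{|\pi|}$ are ordered so that $\max B_1<\dots<\max B_{|\pi|}$. For a block $B=\{b_1<\dots<b_\ell\}$ set $y_B:=y_{b_1}\rhd\big(y_{b_2}\rhd(\cdots\rhd(y_{b_{\ell-1}}\rhd y_{b_\ell})\cdots)\big)\in M$, and $(y_1\cdots y_n)^\pi:=y_{B_1}y_{B_2}\cdots y_{B_{|\pi|}}\in T(M)$. *)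

theory Defs
  imports "HOL-Library.Poly_Mapping" "HOL-Library.Disjoint_Sets"
begin

text \<open>The vector space M is the free k-vector space on a basis type 'b,
  i.e. M = (finitely supported functions from the basis to k) (every vector space is of this form).  The magmatic
  (bilinear) product on M is given by its structure constants
  C :: 'b \<Rightarrow> 'b \<Rightarrow> M, i.e. b \<rhd> b' = C b b'.  The tensor algebra T(M) is then the
  free associative algebra on 'b, modelled as finitely supported functions on words, with the
  concatenation product and unit the empty word.\<close>

definition smul :: "'k::field \<Rightarrow> ('a \<Rightarrow>\<^sub>0 'k) \<Rightarrow> ('a \<Rightarrow>\<^sub>0 'k)" where
  "smul c f = Poly_Mapping.map (\<lambda>a. c * a) f"

definition lin :: "('a \<Rightarrow> ('c \<Rightarrow>\<^sub>0 'k::field)) \<Rightarrow> ('a \<Rightarrow>\<^sub>0 'k) \<Rightarrow> ('c \<Rightarrow>\<^sub>0 'k)" where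
  "lin F f = (\<Sum>a\<in>Poly_Mapping.keys f. smul (Poly_Mapping.lookup f a) (F a))"

definition mop :: "('b \<Rightarrow> 'b \<Rightarrow> ('b \<Rightarrow>\<^sub>0 'k::field)) \<Rightarrow> ('b \<Rightarrow>\<^sub>0 'k) \<Rightarrow> ('b \<Rightarrow>\<^sub>0 'k) \<Rightarrow> ('b \<Rightarrow>\<^sub>0 'k)" where
  "mop C x y = lin (\<lambda>a. lin (\<lambda>b. C a b) y) x"

definition tmul :: "('b list \<Rightarrow>\<^sub>0 'k::field) \<Rightarrow> ('b list \<Rightarrow>\<^sub>0 'k) \<Rightarrow> ('b list \<Rightarrow>\<^sub>0 'k)" where
  "tmul U V = lin (\<lambda>u. lin (\<lambda>v. Poly_Mapping.single (u @ v) 1) V) U"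

definition tone :: "('b list \<Rightarrow>\<^sub>0 'k::field)" where
  "tone = Poly_Mapping.single [] 1"

definition tprod :: "('b list \<Rightarrow>\<^sub>0 'k::field) list \<Rightarrow> ('b list \<Rightarrow>\<^sub>0 'k)" where
  "tprod xs = foldr tmul xs tone"

definition iota :: "('b \<Rightarrow>\<^sub>0 'k::field) \<Rightarrow> ('b list \<Rightarrow>\<^sub>0 'k)" where
  "iota y = lin (\<lambda>b. Poly_Mapping.single [b] 1) y"

definition word :: "'b list \<Rightarrow> ('b list \<Rightarrow>\<^sub>0 'k::field)" where
  "word w = Poly_Mapping.single w 1"

text \<open>For a basis letter x, the action x \<rhd> w on a word w: the unique derivation
  of T(M) extending x \<rhd> - on M.\<close>
definition der :: "('b \<Rightarrow> 'b \<Rightarrow> ('b \<Rightarrow>\<^sub>0 'k::field)) \<Rightarrow> 'b \<Rightarrow> 'b list \<Rightarrow> ('b list \<Rightarrow>\<^sub>0 'k)" where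
  "der C x w = (\<Sum>i<length w. tmul (tmul (word (take i w)) (iota (C x (w ! i)))) (word (drop (Suc i) w)))"

definition derT :: "('b \<Rightarrow> 'b \<Rightarrow> ('b \<Rightarrow>\<^sub>0 'k::field)) \<Rightarrow> 'b \<Rightarrow> ('b list \<Rightarrow>\<^sub>0 'k) \<Rightarrow> ('b list \<Rightarrow>\<^sub>0 'k)" where
  "derT C x U = lin (der C x) U"

text \<open>Extension of \<rhd> to T(M): 1 \<rhd> W = W, (xV) \<rhd> W = x \<rhd> (V \<rhd> W) - (x \<rhd> V) \<rhd> W.
  The natural-number argument is the length of the first word (recursion on length;
  x \<rhd> V consists of words of length |V|).\<close>
primrec tri_aux :: "('b \<Rightarrow> 'b \<Rightarrow> ('b \<Rightarrow>\<^sub>0 'k::field)) \<Rightarrow> nat \<Rightarrow> 'b list \<Rightarrow> ('b list \<Rightarrow>\<^sub>0 'k) \<Rightarrow> ('b list \<Rightarrow>\<^sub>0 'k)" where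
  "tri_aux C 0 V W = W"
| "tri_aux C (Suc n) V W =
     (case V of [] \<Rightarrow> W
      | x # V' \<Rightarrow> derT C x (tri_aux C n V' W) - lin (\<lambda>u. tri_aux C n u W) (der C x V'))"

definition triT :: "('b \<Rightarrow> 'b \<Rightarrow> ('b \<Rightarrow>\<^sub>0 'k::field)) \<Rightarrow> ('b list \<Rightarrow>\<^sub>0 'k) \<Rightarrow> ('b list \<Rightarrow>\<^sub>0 'k) \<Rightarrow> ('b list \<Rightarrow>\<^sub>0 'k)" where
  "triT C U W = lin (\<lambda>u. tri_aux C (length u) u W) U"

text \<open>Gavrilov's K-map: K(1) = 1, K(yU) = y K(U) - K(y \<rhd> U) (y a basis letter,
  extended linearly); again the nat argument is the word length.\<close>
primrec K_aux :: "('b \<Rightarrow> 'b \<Rightarrow> ('b \<Rightarrow>\<^sub>0 'k::field)) \<Rightarrow> nat \<Rightarrow> 'b list \<Rightarrow> ('b list \<Rightarrow>\<^sub>0 'k)" where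
  "K_aux C 0 w = word w"
| "K_aux C (Suc n) w =
     (case w of [] \<Rightarrow> tone
      | y # U \<Rightarrow> tmul (word [y]) (K_aux C n U) - lin (\<lambda>u. K_aux C n u) (triT C (word [y]) (word U)))"

definition Kmap :: "('b \<Rightarrow> 'b \<Rightarrow> ('b \<Rightarrow>\<^sub>0 'k::field)) \<Rightarrow> ('b list \<Rightarrow>\<^sub>0 'k) \<Rightarrow> ('b list \<Rightarrow>\<^sub>0 'k)" where
  "Kmap C U = lin (\<lambda>u. K_aux C (length u) u) U"

fun rnest :: "('a \<Rightarrow> 'a \<Rightarrow> 'a) \<Rightarrow> 'a list \<Rightarrow> 'a::zero" where
  "rnest f [] = 0"
| "rnest f [x] = x"
| "rnest f (x # xs) = f x (rnest f xs)"

definition yblock :: "('b \<Rightarrow> 'b \<Rightarrow> ('b \<Rightarrow>\<^sub>0 'k::field)) \<Rightarrow> (nat \<Rightarrow> ('b \<Rightarrow>\<^sub>0 'k)) \<Rightarrow> nat set \<Rightarrow> ('b \<Rightarrow>\<^sub>0 'k)" where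
  "yblock C y B = rnest (mop C) (map y (sorted_list_of_set B))"

text \<open>(y_1 ... y_n)^\<pi> = y_{B_1} ... y_{B_k}, blocks ordered by increasing maxima.\<close>
definition ypart :: "('b \<Rightarrow> 'b \<Rightarrow> ('b \<Rightarrow>\<^sub>0 'k::field)) \<Rightarrow> (nat \<Rightarrow> ('b \<Rightarrow>\<^sub>0 'k)) \<Rightarrow> nat set set \<Rightarrow> ('b list \<Rightarrow>\<^sub>0 'k)" where
  "ypart C y P = tprod (map (\<lambda>B. iota (yblock C y B)) (sorted_key_list_of_set Max P))"

end

theory Submission
  imports Defs
begin

text \<open>The inverse of \<open>K\<close> is the linear map \<open>L\<close> (\<open>Kinv\<close> below) with \<open>L(1) = 1\<close> and
  \<open>L(xw) = x L(w) + x \<rhd> L(w)\<close> for a letter \<open>x\<close>: applying \<open>K\<close> gives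
  \<open>x K(L w) - K(x \<rhd> L w) + K(x \<rhd> L w) = x w\<close>.
  Hence \<open>L(y\<^sub>1 \<cdots> y\<^sub>n) = y\<^sub>1 L(y\<^sub>2 \<cdots> y\<^sub>n) + y\<^sub>1 \<rhd> L(y\<^sub>2 \<cdots> y\<^sub>n)\<close>, and by induction
  \<open>L(y\<^sub>2 \<cdots> y\<^sub>n)\<close> is the sum over the partitions of \<open>{2..n}\<close>.  The first summand puts the
  singleton block \<open>{1}\<close> in front of each partition; in the second, the derivation \<open>y\<^sub>1 \<rhd> -\<close>
  replaces one block factor \<open>y\<^sub>B\<close> by \<open>y\<^sub>1 \<rhd> y\<^sub>B = y\<^bsub>{1} \<union> B\<^esub>\<close>, which keeps the maximum and
  hence the position of the block.  Every partition of \<open>{1..n}\<close> arises exactly once in this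
  way.\<close>

section \<open>Linear maps between finitely supported functions\<close>

lemma lookup_smul [simp]: "Poly_Mapping.lookup (smul c f) a = c * Poly_Mapping.lookup f a"
  unfolding smul_def by transfer (simp add: when_def)

lemma smul_add: "smul c (f + g) = smul c f + smul c g"
  by (rule poly_mapping_eqI) (simp add: lookup_add algebra_simps)

lemma smul_diff: "smul c (f - g) = smul c f - smul c g"
  by (rule poly_mapping_eqI) (simp add: lookup_minus algebra_simps)

lemma smul_add_left: "smul (c + d) f = smul c f + smul d f"
  by (rule poly_mapping_eqI) (simp add: lookup_add algebra_simps)

lemma smul_zero [simp]: "smul c 0 = 0"
  by (rule poly_mapping_eqI) simp

lemma smul_0_left [simp]: "smul 0 f = 0"
  by (rule poly_mapping_eqI) simp

lemma smul_1_left [simp]: "smul 1 f = f"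
  by (rule poly_mapping_eqI) simp

lemma smul_smul [simp]: "smul c (smul d f) = smul (c * d) f"
  by (rule poly_mapping_eqI) simp

lemma smul_sum: "smul c (sum F A) = (\<Sum>a\<in>A. smul c (F a))"
  by (induct A rule: infinite_finite_induct) (auto simp: smul_add)

lemma lin_eq_sum_superset:
  "finite S \<Longrightarrow> Poly_Mapping.keys f \<subseteq> S \<Longrightarrow> lin F f = (\<Sum>a\<in>S. smul (Poly_Mapping.lookup f a) (F a))"
  unfolding lin_def by (rule sum.mono_neutral_left) (auto simp: in_keys_iff)

lemma lin_add: "lin F (f + g) = lin F f + lin F g"
  using keys_add[of f g]
  by (simp add: lin_eq_sum_superset[of "Poly_Mapping.keys f \<union> Poly_Mapping.keys g"]
      lookup_add smul_add_left sum.distrib)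

lemma lin_smul: "lin F (smul c f) = smul c (lin F f)"
proof -
  have "Poly_Mapping.keys (smul c f) \<subseteq> Poly_Mapping.keys f"
    by (auto simp: in_keys_iff)
  then show ?thesis
    by (simp add: lin_eq_sum_superset[of "Poly_Mapping.keys f"] smul_sum mult.commute)
qed

lemma lin_zero [simp]: "lin F 0 = 0"
  by (simp add: lin_def)

lemma lin_single [simp]: "lin F (Poly_Mapping.single a c) = smul c (F a)"
  by (simp add: lin_eq_sum_superset[of "{a}"])

lemma lin_fun_add: "lin (\<lambda>a. F a + G a) f = lin F f + lin G f"
  by (simp add: lin_def smul_add sum.distrib)

lemma lin_fun_smul: "lin (\<lambda>a. smul c (F a)) f = smul c (lin F f)"
  by (simp add: lin_def smul_sum mult.commute)

lemma lin_fun_zero [simp]: "lin (\<lambda>a. 0) f = 0"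
  by (simp add: lin_def)

lemma lin_cong: "(\<And>a. a \<in> Poly_Mapping.keys f \<Longrightarrow> F a = G a) \<Longrightarrow> lin F f = lin G f"
  by (simp add: lin_def)

lemma lin_single_1: "lin (\<lambda>a. Poly_Mapping.single a 1) f = f"
proof (rule poly_mapping_eqI)
  fix k
  have "Poly_Mapping.lookup (lin (\<lambda>a. Poly_Mapping.single a 1) f) k
      = (\<Sum>a\<in>Poly_Mapping.keys f. if a = k then Poly_Mapping.lookup f a else 0)"
    unfolding lin_def lookup_sum by (intro sum.cong) (auto simp: lookup_single when_def)
  also have "\<dots> = Poly_Mapping.lookup f k"
    by (simp add: sum.delta' in_keys_iff)
  finally show "Poly_Mapping.lookup (lin (\<lambda>a. Poly_Mapping.single a 1) f) k = Poly_Mapping.lookup f k" .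
qed

definition linear_pm :: "(('a \<Rightarrow>\<^sub>0 'k::field) \<Rightarrow> ('c \<Rightarrow>\<^sub>0 'k)) \<Rightarrow> bool" where
  "linear_pm T \<longleftrightarrow> (\<forall>f g. T (f + g) = T f + T g) \<and> (\<forall>c f. T (smul c f) = smul c (T f))"

named_theorems linear_pm_intros

lemma linear_pm_lin [simp]: "linear_pm (lin F)"
  by (simp add: linear_pm_def lin_add lin_smul)

lemma linear_pmD:
  assumes "linear_pm T"
  shows "T (f + g) = T f + T g" and "T 0 = 0" and "T (sum G A) = (\<Sum>a\<in>A. T (G a))"
    and "T (f - g) = T f - T g"
proof -
  show add: "T (f + g) = T f + T g" for f g
    using assms by (simp add: linear_pm_def)
  have "T (smul 0 0) = smul 0 (T 0)"
    using assms by (simp only: linear_pm_def)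
  then show zero: "T 0 = 0" by simp
  show "T (sum G A) = (\<Sum>a\<in>A. T (G a))"
    by (induct A rule: infinite_finite_induct) (simp_all add: zero add)
  show "T (f - g) = T f - T g"
    using add[of "f - g" g] by (simp add: eq_diff_eq)
qed

lemma linear_pm_comp: "linear_pm T \<Longrightarrow> linear_pm S \<Longrightarrow> linear_pm (\<lambda>x. T (S x))"
  by (simp add: linear_pm_def)

lemma linear_pm_add [linear_pm_intros]: "linear_pm T \<Longrightarrow> linear_pm S \<Longrightarrow> linear_pm (\<lambda>x. T x + S x)"
  by (simp add: linear_pm_def smul_add algebra_simps)

lemma linear_pm_diff [linear_pm_intros]: "linear_pm T \<Longrightarrow> linear_pm S \<Longrightarrow> linear_pm (\<lambda>x. T x - S x)"
  by (simp add: linear_pm_def smul_diff algebra_simps)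

lemma linear_pm_id [linear_pm_intros]: "linear_pm (\<lambda>x. x)"
  by (simp add: linear_pm_def)

lemma linear_pm_lin_commute: "linear_pm T \<Longrightarrow> T (lin F f) = lin (\<lambda>a. T (F a)) f"
  unfolding lin_def by (simp add: linear_pmD linear_pm_def)

lemma linear_pm_eq_lin_single: "linear_pm T \<Longrightarrow> T f = lin (\<lambda>a. T (Poly_Mapping.single a 1)) f"
  using linear_pm_lin_commute[of T "\<lambda>a. Poly_Mapping.single a 1" f] by (simp add: lin_single_1)

lemma linear_pm_eq_on_keys:
  assumes "linear_pm T" "linear_pm S"
    and "\<And>a. a \<in> Poly_Mapping.keys f \<Longrightarrow> T (Poly_Mapping.single a 1) = S (Poly_Mapping.single a 1)"
  shows "T f = S f"
  using assms by (simp add: linear_pm_eq_lin_single[of T f] linear_pm_eq_lin_single[of S f] cong: lin_cong)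

lemma linear_pm_eq_words:
  assumes "linear_pm T" "linear_pm S" and "\<And>w. T (word w) = S (word w)"
  shows "T U = S U"
proof (rule linear_pm_eq_on_keys[OF assms(1,2)])
  show "T (Poly_Mapping.single w 1) = S (Poly_Mapping.single w 1)" for w
    using assms(3)[of w] by (simp only: word_def)
qed

lemma tone_eq_word: "tone = word []"
  by (simp add: tone_def word_def)

lemma linear_tmul_left: "linear_pm (\<lambda>U. tmul U V)"
  unfolding tmul_def by simp

lemma linear_tmul_right: "linear_pm (\<lambda>V. tmul U V)"
  unfolding tmul_def linear_pm_def by (simp add: lin_add lin_smul lin_fun_add lin_fun_smul)

lemmas tmul_linear_left = linear_pmD[OF linear_tmul_left]
  and tmul_linear_right = linear_pmD[OF linear_tmul_right]

lemmas [linear_pm_intros] = linear_pm_comp[OF linear_tmul_left] linear_pm_comp[OF linear_tmul_right]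

lemma tmul_word_left: "tmul (word u) V = lin (\<lambda>v. word (u @ v)) V"
  by (simp add: tmul_def word_def)

lemma tmul_word_word [simp]: "tmul (word u) (word v) = word (u @ v)"
  by (simp add: tmul_word_left) (simp add: word_def)

lemma tmul_assoc: "tmul (tmul A B) D = tmul A (tmul B D)"
proof -
  have words: "tmul (word (u @ v)) D = tmul (word u) (tmul (word v) D)" for u v
    by (rule linear_pm_eq_words[of "\<lambda>D. tmul (word (u @ v)) D" "\<lambda>D. tmul (word u) (tmul (word v) D)"])
      (auto intro!: linear_pm_intros)
  have word_left: "tmul (tmul (word u) B) D = tmul (word u) (tmul B D)" for u
    by (rule linear_pm_eq_words[of "\<lambda>B. tmul (tmul (word u) B) D" "\<lambda>B. tmul (word u) (tmul B D)"])
      (auto intro!: linear_pm_intros simp: words)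
  show ?thesis
    by (rule linear_pm_eq_words[of "\<lambda>A. tmul (tmul A B) D" "\<lambda>A. tmul A (tmul B D)"])
      (auto intro!: linear_pm_intros simp: word_left)
qed

lemma tmul_tone_left [simp]: "tmul tone V = V"
  by (simp add: tone_eq_word tmul_word_left) (simp add: word_def lin_single_1)

lemma tmul_tone_right [simp]: "tmul V tone = V"
  using linear_pm_eq_words[OF linear_tmul_left[of tone] linear_pm_id]
  by (simp add: tone_eq_word)

lemma tprod_Nil [simp]: "tprod [] = tone"
  by (simp add: tprod_def)

lemma tprod_Cons [simp]: "tprod (x # xs) = tmul x (tprod xs)"
  by (simp add: tprod_def)

lemma linear_iota: "linear_pm iota"
  unfolding iota_def[abs_def] by simp

lemma iota_eq_lin_word: "iota y = lin (\<lambda>b. word [b]) y"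
  by (simp add: iota_def word_def)

section \<open>The derivations \<open>z \<rhd> -\<close> of the tensor algebra\<close>

lemma linear_derT: "linear_pm (derT C x)"
  unfolding derT_def[abs_def] by simp

lemmas [linear_pm_intros] = linear_pm_comp[OF linear_derT]

lemma derT_word: "derT C x (word w) = der C x w"
  by (simp add: derT_def word_def)

lemma sum_lessThan_add:
  "(\<Sum>i<m + n. f i) = (\<Sum>i<m. f i) + (\<Sum>j<n. f (m + j))" for f :: "nat \<Rightarrow> 'a::comm_monoid_add"
  by (induct n) (auto simp: add.assoc)

lemma der_append: "der C x (u @ v) = tmul (der C x u) (word v) + tmul (word u) (der C x v)"
proof -
  define t where "t w i = tmul (tmul (word (take i w)) (iota (C x (w ! i)))) (word (drop (Suc i) w))"
    for w i
  have der: "der C x w = (\<Sum>i<length w. t w i)" for w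
    by (simp add: der_def t_def)
  have left: "t (u @ v) i = tmul (t u i) (word v)" if "i < length u" for i
    using that by (simp add: t_def tmul_assoc nth_append)
  have right: "t (u @ v) (length u + j) = tmul (word u) (t v j)" for j
    by (simp add: t_def nth_append flip: tmul_word_word) (simp only: tmul_assoc)
  have "der C x (u @ v) = (\<Sum>i<length u. t (u @ v) i) + (\<Sum>j<length v. t (u @ v) (length u + j))"
    by (simp add: der sum_lessThan_add)
  also have "\<dots> = tmul (der C x u) (word v) + tmul (word u) (der C x v)"
    by (simp add: left right der tmul_linear_left tmul_linear_right)
  finally show ?thesis .
qed

lemma derT_tmul: "derT C x (tmul U V) = tmul (derT C x U) V + tmul U (derT C x V)"
proof -
  have word_left: "derT C x (tmul (word u) V) = tmul (derT C x (word u)) V + tmul (word u) (derT C x V)"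
    for u
    by (rule linear_pm_eq_words[of "\<lambda>V. derT C x (tmul (word u) V)"
        "\<lambda>V. tmul (derT C x (word u)) V + tmul (word u) (derT C x V)"])
      (auto intro!: linear_pm_intros simp: derT_word der_append)
  show ?thesis
    by (rule linear_pm_eq_words[of "\<lambda>U. derT C x (tmul U V)" "\<lambda>U. tmul (derT C x U) V + tmul U (derT C x V)"])
      (auto intro!: linear_pm_intros simp: word_left)
qed

lemma derT_iota: "derT C x (iota z) = iota (lin (C x) z)"
proof -
  have "derT C x (word [b]) = iota (C x b)" for b
    by (simp add: derT_word der_def flip: tone_eq_word)
  then have "derT C x (iota z) = lin (\<lambda>b. iota (C x b)) z"
    by (simp add: iota_eq_lin_word[of z] linear_pm_lin_commute[OF linear_derT])
  also have "\<dots> = iota (lin (C x) z)"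
    by (simp add: linear_pm_lin_commute[OF linear_iota])
  finally show ?thesis .
qed

lemma derT_tone: "derT C x tone = 0"
  by (simp add: tone_eq_word derT_word der_def)

definition derM :: "('b \<Rightarrow> 'b \<Rightarrow> ('b \<Rightarrow>\<^sub>0 'k::field)) \<Rightarrow> ('b \<Rightarrow>\<^sub>0 'k) \<Rightarrow> ('b list \<Rightarrow>\<^sub>0 'k) \<Rightarrow> ('b list \<Rightarrow>\<^sub>0 'k)"
  where "derM C z V = lin (\<lambda>x. derT C x V) z"

lemma linear_derM: "linear_pm (derM C z)"
  by (simp add: linear_pm_def derM_def derT_def lin_add lin_smul lin_fun_add lin_fun_smul)

lemma derM_tmul: "derM C z (tmul U V) = tmul (derM C z U) V + tmul U (derM C z V)"
  by (simp add: derM_def derT_tmul lin_fun_add linear_pm_lin_commute[OF linear_tmul_left]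
      linear_pm_lin_commute[OF linear_tmul_right])

lemma derM_iota: "derM C z (iota w) = iota (mop C z w)"
  by (simp add: derM_def derT_iota mop_def linear_pm_lin_commute[OF linear_iota])

lemma derM_tone: "derM C z tone = 0"
  by (simp add: derM_def derT_tone)

section \<open>The inverse of the \<open>K\<close>-map\<close>

definition homogeneous :: "nat \<Rightarrow> ('b list \<Rightarrow>\<^sub>0 'k::field) \<Rightarrow> bool" where
  "homogeneous n U \<longleftrightarrow> (\<forall>u\<in>Poly_Mapping.keys U. length u = n)"

lemma homogeneous_sum: "(\<And>a. a \<in> A \<Longrightarrow> homogeneous n (F a)) \<Longrightarrow> homogeneous n (sum F A)"
proof (induct A rule: infinite_finite_induct)
  case (insert a A)
  then show ?case
    using keys_add[of "F a" "sum F A"] by (auto simp: homogeneous_def)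
qed (simp_all add: homogeneous_def)

lemma homogeneous_lin:
  "(\<And>a. a \<in> Poly_Mapping.keys f \<Longrightarrow> homogeneous n (F a)) \<Longrightarrow> homogeneous n (lin F f)"
  unfolding lin_def by (rule homogeneous_sum) (auto simp: homogeneous_def in_keys_iff)

lemma homogeneous_word: "homogeneous (length w) (word w)"
  by (simp add: homogeneous_def word_def)

lemma homogeneous_tmul: "homogeneous m U \<Longrightarrow> homogeneous k V \<Longrightarrow> homogeneous (m + k) (tmul U V)"
  unfolding tmul_def by (intro homogeneous_lin) (auto simp: homogeneous_def)

lemma homogeneous_iota: "homogeneous 1 (iota z)"
  unfolding iota_def by (rule homogeneous_lin) (simp add: homogeneous_def)

lemma homogeneous_der: "homogeneous (length w) (der C x w)"
  unfolding der_def
proof (rule homogeneous_sum)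
  fix i assume "i \<in> {..<length w}"
  then have "length w = (length (take i w) + 1) + length (drop (Suc i) w)"
    by simp
  then show "homogeneous (length w) (tmul (tmul (word (take i w)) (iota (C x (w ! i)))) (word (drop (Suc i) w)))"
    by (metis homogeneous_iota homogeneous_tmul homogeneous_word)
qed

lemma linear_Kmap: "linear_pm (Kmap C)"
  unfolding Kmap_def[abs_def] by simp

lemmas [linear_pm_intros] = linear_pm_comp[OF linear_Kmap]

lemma Kmap_word: "Kmap C (word w) = K_aux C (length w) w"
  by (simp add: Kmap_def word_def)

lemma Kmap_word_Cons: "Kmap C (word (x # w)) = tmul (word [x]) (Kmap C (word w)) - Kmap C (derT C x (word w))"
proof -
  have "triT C (word [x]) (word w) = derT C x (word w)"
    by (simp add: triT_def word_def der_def)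
  moreover have "lin (K_aux C (length w)) (der C x w) = Kmap C (der C x w)"
    unfolding Kmap_def
    by (rule lin_cong) (use homogeneous_der[of w C x] in \<open>auto simp: homogeneous_def\<close>)
  ultimately have "K_aux C (length (x # w)) (x # w)
      = tmul (word [x]) (K_aux C (length w) w) - Kmap C (derT C x (word w))"
    by (simp add: derT_word)
  then show ?thesis
    by (simp only: Kmap_word)
qed

lemma Kmap_letter_tmul: "Kmap C (tmul (word [x]) V) = tmul (word [x]) (Kmap C V) - Kmap C (derT C x V)"
  by (rule linear_pm_eq_words[of "\<lambda>V. Kmap C (tmul (word [x]) V)"
        "\<lambda>V. tmul (word [x]) (Kmap C V) - Kmap C (derT C x V)"])
    (auto intro!: linear_pm_intros simp: Kmap_word_Cons)

fun Kinv_aux :: "('b \<Rightarrow> 'b \<Rightarrow> ('b \<Rightarrow>\<^sub>0 'k::field)) \<Rightarrow> 'b list \<Rightarrow> ('b list \<Rightarrow>\<^sub>0 'k)" where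
  "Kinv_aux C [] = tone"
| "Kinv_aux C (x # w) = tmul (word [x]) (Kinv_aux C w) + derT C x (Kinv_aux C w)"

definition Kinv :: "('b \<Rightarrow> 'b \<Rightarrow> ('b \<Rightarrow>\<^sub>0 'k::field)) \<Rightarrow> ('b list \<Rightarrow>\<^sub>0 'k) \<Rightarrow> ('b list \<Rightarrow>\<^sub>0 'k)" where
  "Kinv C U = lin (Kinv_aux C) U"

lemma linear_Kinv: "linear_pm (Kinv C)"
  unfolding Kinv_def[abs_def] by simp

lemmas [linear_pm_intros] = linear_pm_comp[OF linear_Kinv]

lemma Kinv_word: "Kinv C (word w) = Kinv_aux C w"
  by (simp add: Kinv_def word_def)

lemma Kinv_letter_tmul: "Kinv C (tmul (word [x]) V) = tmul (word [x]) (Kinv C V) + derT C x (Kinv C V)"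
  by (rule linear_pm_eq_words[of "\<lambda>V. Kinv C (tmul (word [x]) V)"
        "\<lambda>V. tmul (word [x]) (Kinv C V) + derT C x (Kinv C V)"])
    (auto intro!: linear_pm_intros simp: Kinv_word)

lemma Kmap_Kinv: "Kmap C (Kinv C U) = U"
proof -
  have words: "Kmap C (Kinv_aux C w) = word w" for w
    by (induct w) (simp_all add: tone_eq_word Kmap_word Kmap_letter_tmul linear_pmD[OF linear_Kmap])
  show ?thesis
    by (rule linear_pm_eq_words[of "\<lambda>U. Kmap C (Kinv C U)" "\<lambda>U. U"])
      (auto intro!: linear_pm_intros simp: Kinv_word words)
qed

text \<open>Induction on the word length: \<open>x \<rhd> v\<close> has the length of \<open>v\<close>.\<close>

lemma Kinv_Kmap_word: "Kinv C (Kmap C (word w)) = word w"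
proof (induct "length w" arbitrary: w rule: less_induct)
  case less
  show ?case
  proof (cases w)
    case Nil
    then show ?thesis
      by (simp add: Kmap_word Kinv_word tone_eq_word)
  next
    case (Cons x v)
    have IH_der: "Kinv C (Kmap C (der C x v)) = der C x v"
    proof (rule linear_pm_eq_on_keys)
      fix u assume "u \<in> Poly_Mapping.keys (der C x v)"
      then have "length u < length w"
        using homogeneous_der[of v C x] Cons by (auto simp: homogeneous_def)
      then show "Kinv C (Kmap C (Poly_Mapping.single u 1)) = Poly_Mapping.single u 1"
        using less[of u] by (simp add: word_def)
    qed (auto intro!: linear_pm_intros)
    have IH: "Kinv C (Kmap C (word v)) = word v"
      using less[of v] Cons by simp
    show ?thesis
      by (simp add: Cons Kmap_word_Cons derT_word linear_pmD[OF linear_Kinv] Kinv_letter_tmul IH IH_der)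
  qed
qed

lemma inv_Kmap_eq_Kinv: "inv (Kmap C) U = Kinv C U"
proof (rule inv_f_eq)
  have "Kinv C (Kmap C U) = U" for U
    by (rule linear_pm_eq_words[of "\<lambda>U. Kinv C (Kmap C U)" "\<lambda>U. U"])
      (auto intro!: linear_pm_intros simp: Kinv_Kmap_word)
  then show "inj (Kmap C)"
    by (metis injI)
qed (rule Kmap_Kinv)

lemma Kinv_iota_tmul: "Kinv C (tmul (iota z) V) = tmul (iota z) (Kinv C V) + derM C z (Kinv C V)"
proof -
  have "Kinv C (tmul (iota z) V) = lin (\<lambda>b. Kinv C (tmul (word [b]) V)) z"
    by (simp add: iota_eq_lin_word linear_pm_lin_commute[OF linear_tmul_left]
        linear_pm_lin_commute[OF linear_Kinv])
  then show ?thesis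
    by (simp add: Kinv_letter_tmul lin_fun_add derM_def iota_eq_lin_word
        linear_pm_lin_commute[OF linear_tmul_left])
qed

section \<open>Set partitions\<close>

lemma partition_on_block_disjnt:
  assumes "partition_on A P" "X \<in> P"
  shows "disjnt X (\<Union>(P - {X}))"
  using partition_onD2[OF assms(1)] assms(2) by (auto simp: disjnt_def pairwise_def)

lemma partition_on_remove_block:
  assumes "partition_on A P" "X \<in> P"
  shows "partition_on (A - X) (P - {X})"
  using partition_on_insert[OF partition_on_block_disjnt[OF assms], of A] assms
  by (simp add: insert_absorb)

lemma partition_on_insert_singleton:
  assumes "partition_on A Q" "a \<notin> A"
  shows "partition_on (insert a A) (insert {a} Q)"
  using assms partition_onD1[OF assms(1)] by (subst partition_on_insert) (auto simp: disjnt_def)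

lemma partition_on_insert_into_block:
  assumes "partition_on A Q" "a \<notin> A" "B \<in> Q"
  shows "partition_on (insert a A) (insert (insert a B) (Q - {B}))"
proof -
  have disj: "disjnt (insert a B) (\<Union>(Q - {B}))"
    using partition_on_block_disjnt[OF assms(1,3)] partition_onD1[OF assms(1)] assms(2)
    by (auto simp: disjnt_def)
  have "insert a A - insert a B = A - B"
    using assms(2) by blast
  then show ?thesis
    using partition_on_remove_block[OF assms(1,3)] partition_onD1[OF assms(1)] assms(3)
    by (auto simp: partition_on_insert[OF disj])
qed

lemma partition_on_delete_from_block:
  assumes "partition_on (insert a A) P" "a \<notin> A" "X \<in> P" "a \<in> X" "X \<noteq> {a}"
  shows "partition_on A (insert (X - {a}) (P - {X}))"
proof -
  have disj: "disjnt (X - {a}) (\<Union>(P - {X}))"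
    using partition_on_block_disjnt[OF assms(1,3)] by (auto simp: disjnt_def)
  have "A - (X - {a}) = insert a A - X"
    using assms(2,4) by blast
  moreover have "X \<subseteq> insert a A"
    using partition_onD1[OF assms(1)] assms(3) by blast
  ultimately show ?thesis
    using partition_on_remove_block[OF assms(1,3)] assms(2,4,5)
    by (auto simp: partition_on_insert[OF disj])
qed

lemma partitions_insert_eq:
  assumes "a \<notin> A"
  shows "{P. partition_on (insert a A) P}
    = (\<lambda>Q. insert {a} Q) ` {Q. partition_on A Q}
      \<union> (\<lambda>(Q, B). insert (insert a B) (Q - {B})) ` (SIGMA Q:{Q. partition_on A Q}. Q)"
proof (intro equalityI subsetI)
  fix P assume "P \<in> {P. partition_on (insert a A) P}"
  then have P: "partition_on (insert a A) P" by simp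
  then obtain X where X: "X \<in> P" "a \<in> X"
    using partition_onD1[OF P] by blast
  show "P \<in> (\<lambda>Q. insert {a} Q) ` {Q. partition_on A Q}
      \<union> (\<lambda>(Q, B). insert (insert a B) (Q - {B})) ` (SIGMA Q:{Q. partition_on A Q}. Q)"
  proof (cases "X = {a}")
    case True
    have "partition_on A (P - {X})"
      using partition_on_remove_block[OF P X(1)] True assms by (simp add: insert_Diff_if)
    moreover have "P = insert {a} (P - {X})"
      using X True by blast
    ultimately show ?thesis by blast
  next
    case False
    define B where "B = X - {a}"
    have "B \<notin> P - {X}"
      using partition_on_block_disjnt[OF P X(1)] False X(2) by (auto simp: B_def disjnt_def)
    moreover have "insert a B = X"
      using X(2) by (auto simp: B_def)
    ultimately have "P = insert (insert a B) (insert B (P - {X}) - {B})"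
      using X(1) by auto
    moreover have "partition_on A (insert B (P - {X}))"
      unfolding B_def by (rule partition_on_delete_from_block[OF P assms X False])
    ultimately show ?thesis
      by (intro UnI2 image_eqI[where x = "(insert B (P - {X}), B)"]) auto
  qed
qed (auto intro: partition_on_insert_singleton[OF _ assms] partition_on_insert_into_block[OF _ assms])

lemma sum_partition_on_insert:
  assumes "finite A" "a \<notin> A"
  shows "(\<Sum>P\<in>{P. partition_on (insert a A) P}. f P)
    = (\<Sum>Q\<in>{Q. partition_on A Q}. f (insert {a} Q) + (\<Sum>B\<in>Q. f (insert (insert a B) (Q - {B}))))"
proof -
  define parts where "parts = {Q. partition_on A Q}"
  define blocks where "blocks = (SIGMA Q:parts. Q)"
  define add_singleton where "add_singleton = (\<lambda>Q. insert {a} Q)"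
  define add_to_block where "add_to_block = (\<lambda>(Q, B). insert (insert a B) (Q - {B}))"
  have block: "a \<notin> B" "B \<noteq> {}" if "Q \<in> parts" "B \<in> Q" for Q B
    using that assms(2) partition_onD1[of A Q] partition_onD3[of A Q] by (auto simp: parts_def)
  have fin_parts: "finite parts"
    unfolding parts_def by (rule finitely_many_partition_on[OF assms(1)])
  have fin_part: "finite Q" if "Q \<in> parts" for Q
    using that finite_elements[OF assms(1)] by (simp add: parts_def)
  have singleton_notin: "{a} \<notin> Q" if "Q \<in> parts" for Q
    using block(1)[OF that] by blast
  have inj_singleton: "inj_on add_singleton parts"
    by (intro inj_onI) (simp add: add_singleton_def insert_ident singleton_notin)
  have inj_to_block: "inj_on add_to_block blocks"
  proof (intro inj_onI, clarify)
    fix Q1 B1 Q2 B2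
    assume "(Q1, B1) \<in> blocks" "(Q2, B2) \<in> blocks"
    then have in1: "Q1 \<in> parts" "B1 \<in> Q1" and in2: "Q2 \<in> parts" "B2 \<in> Q2"
      by (simp_all add: blocks_def)
    assume "add_to_block (Q1, B1) = add_to_block (Q2, B2)"
    then have eq: "insert (insert a B1) (Q1 - {B1}) = insert (insert a B2) (Q2 - {B2})"
      by (simp add: add_to_block_def)
    have notin: "insert a B1 \<notin> Q2 - {B2}" "insert a B2 \<notin> Q1 - {B1}"
      using block(1)[OF in1(1)] block(1)[OF in2(1)] by blast+
    then have "insert a B1 = insert a B2"
      using eq by blast
    then have "B1 = B2"
      using block(1)[OF in1] block(1)[OF in2] by (metis insert_ident)
    moreover have "Q1 - {B1} = Q2 - {B2}"
      using eq notin \<open>insert a B1 = insert a B2\<close> by (metis insert_ident)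
    ultimately show "Q1 = Q2 \<and> B1 = B2"
      using in1(2) in2(2) by blast
  qed
  have "{a} \<notin> add_to_block (Q, B)" if "Q \<in> parts" "B \<in> Q" for Q B
    using block[OF that] singleton_notin[OF that(1)] by (auto simp: add_to_block_def)
  then have disjoint: "add_singleton ` parts \<inter> add_to_block ` blocks = {}"
    by (auto simp: add_singleton_def blocks_def)
  have "{P. partition_on (insert a A) P} = add_singleton ` parts \<union> add_to_block ` blocks"
    unfolding add_singleton_def add_to_block_def parts_def blocks_def
    by (rule partitions_insert_eq[OF assms(2)])
  then have "(\<Sum>P\<in>{P. partition_on (insert a A) P}. f P)
      = (\<Sum>P\<in>add_singleton ` parts. f P) + (\<Sum>P\<in>add_to_block ` blocks. f P)"
    using fin_parts fin_part disjoint by (simp add: sum.union_disjoint blocks_def)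
  also have "\<dots> = (\<Sum>Q\<in>parts. f (add_singleton Q)) + (\<Sum>z\<in>blocks. f (add_to_block z))"
    by (simp add: sum.reindex[OF inj_singleton] sum.reindex[OF inj_to_block])
  also have "(\<Sum>z\<in>blocks. f (add_to_block z)) = (\<Sum>Q\<in>parts. \<Sum>B\<in>Q. f (insert (insert a B) (Q - {B})))"
    unfolding blocks_def add_to_block_def using fin_parts fin_part by (simp add: sum.Sigma split_def)
  finally show ?thesis
    by (simp add: parts_def add_singleton_def sum.distrib)
qed

context linorder
begin

lemma sorted_key_list_of_set_eqI:
  assumes "sorted_wrt (<) (map f xs)"
  shows "sorted_key_list_of_set f (set xs) = xs"
proof -
  have "distinct (map f xs)"
    using assms by (simp add: strict_sorted_iff)
  then have inj: "inj_on f (set xs)" and dist: "distinct xs"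
    by (simp_all add: distinct_map)
  interpret folding_insort_key "(\<le>)" "(<)" "set xs" f
    by unfold_locales (fact inj)
  show ?thesis
    using idem_if_sorted_distinct[of xs] assms dist by (simp add: strict_sorted_iff)
qed

lemma sorted_key_list_of_set_inj_on:
  assumes "inj_on f A" "finite A"
  shows "set (sorted_key_list_of_set f A) = A" "sorted_wrt (<) (map f (sorted_key_list_of_set f A))"
proof -
  interpret folding_insort_key "(\<le>)" "(<)" A f
    by unfold_locales (fact assms(1))
  show "set (sorted_key_list_of_set f A) = A" "sorted_wrt (<) (map f (sorted_key_list_of_set f A))"
    using assms(2) by simp_all
qed

end

lemma partition_on_block_finite_nonempty:
  assumes "partition_on A P" "finite A" "X \<in> P"
  shows "finite X" "X \<noteq> {}"
proof -
  have "X \<subseteq> A"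
    using partition_onD1[OF assms(1)] assms(3) by blast
  then show "finite X"
    using assms(2) by (rule finite_subset)
  show "X \<noteq> {}"
    using partition_onD3[OF assms(1)] assms(3) by blast
qed

lemma partition_on_inj_on_Max:
  assumes "partition_on A P" "finite A"
  shows "inj_on Max P"
proof (rule inj_onI)
  fix X Y assume XY: "X \<in> P" "Y \<in> P" "Max X = Max Y"
  have "Max X \<in> X" "Max Y \<in> Y"
    using partition_on_block_finite_nonempty[OF assms] XY(1,2) Max_in by blast+
  then have "\<not> disjnt X Y"
    using XY(3) by (auto simp: disjnt_def)
  then show "X = Y"
    using partition_on_block_disjnt[OF assms(1) XY(1)] XY(2) by (auto simp: disjnt_def)
qed

context
  fixes A :: "'a::linorder set" and Q a
  assumes partition: "partition_on A Q" and finite: "finite A" and above: "\<forall>x\<in>A. a < x"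
begin

lemma finite_partition_blocks: "finite Q"
  by (rule finite_elements[OF finite partition])

lemma below_partition_block:
  assumes "B \<in> Q"
  shows "\<forall>b\<in>B. a < b" "a < Max B"
proof -
  show below: "\<forall>b\<in>B. a < b"
    using partition_onD1[OF partition] assms above by blast
  show "a < Max B"
    using partition_on_block_finite_nonempty[OF partition finite assms] Max_in below by blast
qed

lemma sorted_blocks_insert_singleton:
  "sorted_key_list_of_set Max (insert {a} Q) = {a} # sorted_key_list_of_set Max Q"
proof -
  let ?L = "sorted_key_list_of_set Max Q"
  note L = sorted_key_list_of_set_inj_on[OF partition_on_inj_on_Max[OF partition finite]
      finite_partition_blocks]
  have "sorted_wrt (<) (map Max ({a} # ?L))"
    using L below_partition_block by auto
  then show ?thesis
    using sorted_key_list_of_set_eqI L(1) by fastforce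
qed

lemma sorted_blocks_insert_into_block:
  assumes "B \<in> Q"
  shows "sorted_key_list_of_set Max (insert (insert a B) (Q - {B}))
    = map (\<lambda>X. if X = B then insert a B else X) (sorted_key_list_of_set Max Q)"
proof -
  let ?L = "sorted_key_list_of_set Max Q" and ?g = "\<lambda>X. if X = B then insert a B else X"
  note L = sorted_key_list_of_set_inj_on[OF partition_on_inj_on_Max[OF partition finite]
      finite_partition_blocks]
  have "Max (insert a B) = Max B"
    using partition_on_block_finite_nonempty[OF partition finite assms] below_partition_block(2)[OF assms]
    by (simp add: max_def less_imp_le)
  then have "map Max (map ?g ?L) = map Max ?L"
    by auto
  then have "sorted_key_list_of_set Max (set (map ?g ?L)) = map ?g ?L"
    using L(2) by (intro sorted_key_list_of_set_eqI) (simp only:)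
  moreover have "set (map ?g ?L) = insert (insert a B) (Q - {B})"
    using L(1) assms by auto
  ultimately show ?thesis
    by simp
qed

end

section \<open>The partition monomials\<close>

lemma yblock_singleton: "yblock C y {a} = y a"
  by (simp add: yblock_def)

lemma yblock_insert_min:
  assumes "finite B" "B \<noteq> {}" "\<forall>b\<in>B. a < b"
  shows "yblock C y (insert a B) = mop C (y a) (yblock C y B)"
proof -
  have "sorted_list_of_set (insert a B) = a # sorted_list_of_set B"
    using assms by (intro sorted_list_of_set_unique[THEN iffD1]) auto
  moreover obtain b bs where "sorted_list_of_set B = b # bs"
    using assms(1,2) by (cases "sorted_list_of_set B") auto
  ultimately show ?thesis
    by (simp add: yblock_def)
qed

lemma derM_tprod_iota:
  "distinct L \<Longrightarrow> derM C z (tprod (map (\<lambda>X. iota (h X)) L))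
    = (\<Sum>X\<in>set L. tprod (map (\<lambda>X'. iota ((h(X := mop C z (h X))) X')) L))"
proof (induct L)
  case Nil
  then show ?case
    by (simp add: derM_tone)
next
  case (Cons X0 L)
  then have unchanged: "map (\<lambda>X'. iota (if X' = X then v else h X')) L = map (\<lambda>X'. iota (h X')) L"
    if "X \<notin> set L" for X v
    using that by (intro map_cong) auto
  have "(\<Sum>X\<in>set L. tprod (map (\<lambda>X'. iota ((h(X := mop C z (h X))) X')) (X0 # L)))
      = tmul (iota (h X0)) (\<Sum>X\<in>set L. tprod (map (\<lambda>X'. iota ((h(X := mop C z (h X))) X')) L))"
    using Cons.prems by (auto simp: tmul_linear_right intro!: sum.cong)
  then show ?case
    using Cons by (simp add: derM_tmul derM_iota unchanged)
qed

lemma ypart_insert_singleton: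
  assumes "partition_on A Q" "finite A" "\<forall>x\<in>A. a < x"
  shows "ypart C y (insert {a} Q) = tmul (iota (y a)) (ypart C y Q)"
  by (simp add: ypart_def sorted_blocks_insert_singleton[OF assms] yblock_singleton)

lemma derM_ypart:
  assumes "partition_on A Q" "finite A" "\<forall>x\<in>A. a < x"
  shows "derM C (y a) (ypart C y Q) = (\<Sum>B\<in>Q. ypart C y (insert (insert a B) (Q - {B})))"
proof -
  let ?L = "sorted_key_list_of_set Max Q" and ?Y = "yblock C y"
  note L = sorted_key_list_of_set_inj_on[OF partition_on_inj_on_Max[OF assms(1,2)]
      finite_partition_blocks[OF assms]]
  have "distinct ?L"
    using L(2) strict_sorted_iff distinct_map by blast
  then have "derM C (y a) (ypart C y Q)
      = (\<Sum>B\<in>Q. tprod (map (\<lambda>X. iota ((?Y(B := mop C (y a) (?Y B))) X)) ?L))"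
    by (simp add: ypart_def derM_tprod_iota L(1))
  also have "\<dots> = (\<Sum>B\<in>Q. ypart C y (insert (insert a B) (Q - {B})))"
  proof (rule sum.cong[OF refl])
    fix B assume "B \<in> Q"
    then have "?Y (insert a B) = mop C (y a) (?Y B)"
      using partition_on_block_finite_nonempty[OF assms(1,2)] below_partition_block(1)[OF assms]
      by (intro yblock_insert_min)
    then have "?Y(B := mop C (y a) (?Y B)) = (\<lambda>X. ?Y (if X = B then insert a B else X))"
      by (auto simp: fun_eq_iff)
    then show "tprod (map (\<lambda>X. iota ((?Y(B := mop C (y a) (?Y B))) X)) ?L)
        = ypart C y (insert (insert a B) (Q - {B}))"
      by (simp add: ypart_def sorted_blocks_insert_into_block[OF assms \<open>B \<in> Q\<close>] comp_def)
  qed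
  finally show ?thesis .
qed

lemma Kinv_tprod_iota:
  "Kinv C (tprod (map (\<lambda>i. iota (y i)) [a..<b])) = (\<Sum>P\<in>{P. partition_on {a..<b} P}. ypart C y P)"
proof (induct "b - a" arbitrary: a)
  case 0
  then have "[a..<b] = []" "{a..<b} = {}"
    by auto
  moreover have "sorted_key_list_of_set Max ({} :: nat set set) = []"
    using sorted_key_list_of_set_eqI[of Max "[]"] by simp
  ultimately show ?case
    by (simp add: partition_on_empty ypart_def tone_eq_word Kinv_word)
next
  case (Suc n)
  then have "[a..<b] = a # [Suc a..<b]" "{a..<b} = insert a {Suc a..<b}"
    by (auto simp: upt_conv_Cons)
  moreover have "Kinv C (tprod (map (\<lambda>i. iota (y i)) [Suc a..<b]))
      = (\<Sum>Q\<in>{Q. partition_on {Suc a..<b} Q}. ypart C y Q)"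
    using Suc by simp
  ultimately have "Kinv C (tprod (map (\<lambda>i. iota (y i)) [a..<b]))
      = (\<Sum>Q\<in>{Q. partition_on {Suc a..<b} Q}. tmul (iota (y a)) (ypart C y Q) + derM C (y a) (ypart C y Q))"
    by (simp add: Kinv_iota_tmul tmul_linear_right linear_pmD[OF linear_derM] sum.distrib)
  also have "\<dots> = (\<Sum>Q\<in>{Q. partition_on {Suc a..<b} Q}.
      ypart C y (insert {a} Q) + (\<Sum>B\<in>Q. ypart C y (insert (insert a B) (Q - {B}))))"
    by (intro sum.cong refl) (simp add: ypart_insert_singleton derM_ypart)
  also have "\<dots> = (\<Sum>P\<in>{P. partition_on {a..<b} P}. ypart C y P)"
    unfolding \<open>{a..<b} = insert a {Suc a..<b}\<close> by (rule sum_partition_on_insert[symmetric]) auto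
  finally show ?case .
qed

theorem proposition2p19:
  fixes C :: "'b \<Rightarrow> 'b \<Rightarrow> ('b \<Rightarrow>\<^sub>0 'k::field_char_0)"
    and n :: nat
    and y :: "nat \<Rightarrow> ('b \<Rightarrow>\<^sub>0 'k)"
  shows "inv (Kmap C) (tprod (map (\<lambda>i. iota (y i)) [1..<Suc n]))
           = (\<Sum>P \<in> {P. partition_on {1..n} P}. ypart C y P)"
  using Kinv_tprod_iota[of C y 1 "Suc n"] by (simp add: inv_Kmap_eq_Kinv atLeastLessThanSuc_atLeastAtMost)

end
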